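(* Assume the linear-model assumption and the irrepresentable condition from the context. Let $S\subseteq S^*$ be fixed, and let real numbers $(\tilde Z_i)_{i\in[d]\setminus S}$ and positive numbers $(\varepsilon_i)_{i\in[d]\setminus S}$ be given. Suppose there exists $\hat i\in[d]\setminus S$ such that (a) $\hat i\in\arg\max_{i\in[d]\setminus S}\{|\tilde Z_i|+\varepsilon_i\}$; (b) $|\tilde Z_i-Z_i^S|\le\varepsilon_i$ for all $i\in[d]\setminus S$; (c) $|\tilde Z_{\hat i}|>\frac{1+\mu_{S^*}}{1-\mu_{S^*}}\varepsilon_{\hat i}$. Then $|Z_{\hat i}^S|>\mu_{S^*}\max_{i\in S^*}|Z_i^S|$.
   Context: $(x,y)$ is a square-integrable random pair with $x\in\mathbb{R}^d$. Linear-model assumption: $\mathbb{E}[x]=0$, $y=\langle\beta^*,x\rangle+\epsilon$, $\mathbb{E}[\epsilon\mid x]=0$; $S^*=\mathrm{supp}(\beta^* )$, $s^*=|S^*|$. $\Sigma$ is the covariance of $x$, $\Sigma_F$ its principal submatrix on $F\subseteq[d]$, and $\mu_F=\max_{j\notin F}\|\Sigma_F^{-1}\mathrm{Cov}(x_F,x_j)\|_1$. Irrepresentable condition: for all $|F|=s^*$, $\Sigma_F$ is invertible and $0\le\mu_F<1$. $\mathcal{R}(\beta)=\mathbb{E}[(y-\langle x,\beta\rangle)^2]$, $\beta^S\in\arg\min_{\mathrm{supp}(\beta)\subseteq S}\mathcal{R}(\beta)$, and $Z_i^S=\mathbb{E}[x_i(y-\langle x,\beta^S\rangle)]$. *)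

theory Defs
  imports "HOL-Probability.Probability"
begin

definition supp :: "real^'d \<Rightarrow> 'd set" where
  "supp \<beta> = {i. \<beta> $ i \<noteq> 0}"

definition cov :: "'a measure \<Rightarrow> ('a \<Rightarrow> real) \<Rightarrow> ('a \<Rightarrow> real) \<Rightarrow> real" where
  "cov M U V = (\<integral>\<omega>. (U \<omega> - (\<integral>\<eta>. U \<eta> \<partial>M)) * (V \<omega> - (\<integral>\<eta>. V \<eta> \<partial>M)) \<partial>M)"

definition Sigma :: "'a measure \<Rightarrow> ('a \<Rightarrow> real^'d) \<Rightarrow> 'd \<Rightarrow> 'd \<Rightarrow> real" where
  "Sigma M x i j = cov M (\<lambda>\<omega>. x \<omega> $ i) (\<lambda>\<omega>. x \<omega> $ j)"

definition subm_invertible :: "('d \<Rightarrow> 'd \<Rightarrow> real) \<Rightarrow> 'd set \<Rightarrow> bool" where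
  "subm_invertible \<Sigma> F \<longleftrightarrow>
     (\<forall>v::'d \<Rightarrow> real. (\<forall>i\<in>F. (\<Sum>k\<in>F. \<Sigma> i k * v k) = 0) \<longrightarrow> (\<forall>k\<in>F. v k = 0))"

text \<open>Sigma_F^{-1} Cov(x_F, x_j), as a vector supported on F.\<close>
definition subm_solve :: "('d \<Rightarrow> 'd \<Rightarrow> real) \<Rightarrow> 'd set \<Rightarrow> 'd \<Rightarrow> ('d \<Rightarrow> real)" where
  "subm_solve \<Sigma> F j = (THE w. (\<forall>k. k \<notin> F \<longrightarrow> w k = 0) \<and>
       (\<forall>i\<in>F. (\<Sum>k\<in>F. \<Sigma> i k * w k) = \<Sigma> i j))"

text \<open>mu_F = max_{j notin F} || Sigma_F^{-1} Cov(x_F,x_j) ||_1 (convention: max over empty set = 0).\<close>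
definition mu :: "('d::finite \<Rightarrow> 'd \<Rightarrow> real) \<Rightarrow> 'd set \<Rightarrow> real" where
  "mu \<Sigma> F = Max (insert 0 {(\<Sum>k\<in>F. \<bar>subm_solve \<Sigma> F j k\<bar>) | j. j \<notin> F})"

definition risk :: "'a measure \<Rightarrow> ('a \<Rightarrow> real^'d) \<Rightarrow> ('a \<Rightarrow> real) \<Rightarrow> real^'d \<Rightarrow> real" where
  "risk M x y \<beta> = (\<integral>\<omega>. (y \<omega> - \<beta> \<bullet> x \<omega>)\<^sup>2 \<partial>M)"

definition Zres :: "'a measure \<Rightarrow> ('a \<Rightarrow> real^'d) \<Rightarrow> ('a \<Rightarrow> real) \<Rightarrow> real^'d \<Rightarrow> 'd \<Rightarrow> real" where
  "Zres M x y \<beta> i = (\<integral>\<omega>. x \<omega> $ i * (y \<omega> - \<beta> \<bullet> x \<omega>) \<partial>M)"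

end

theory Submission
  imports Defs
begin

text \<open>Since \<open>\<beta>\<^sup>S\<close> minimises the risk among vectors supported on \<open>S\<close>, moving it along a
  coordinate \<open>i \<in> S\<close> cannot decrease the risk, and this first-order condition gives
  \<open>Z\<^sub>i\<^sup>S = 0\<close>. Off \<open>S\<close>, (b) and (a) give \<open>|Z\<^sub>i\<^sup>S| \<le> |Z~\<^sub>i| + \<epsilon>\<^sub>i \<le> B\<close> with
  \<open>B = |Z~\<^sub>j| + \<epsilon>\<^sub>j\<close> for the selected index \<open>j\<close>, so \<open>B\<close> bounds every \<open>|Z\<^sub>i\<^sup>S|\<close>.
  Condition (c) is equivalent to \<open>\<mu> B < |Z~\<^sub>j| - \<epsilon>\<^sub>j\<close> (as \<open>\<mu> < 1\<close>), and the
  right-hand side is at most \<open>|Z\<^sub>j\<^sup>S|\<close> by (b).\<close>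

lemma integrable_mult_of_square_integrable:
  fixes f g :: "'a \<Rightarrow> real"
  assumes "f \<in> borel_measurable M" "g \<in> borel_measurable M"
    and "integrable M (\<lambda>w. (f w)\<^sup>2)" "integrable M (\<lambda>w. (g w)\<^sup>2)"
  shows "integrable M (\<lambda>w. f w * g w)"
proof (rule Bochner_Integration.integrable_bound)
  show "integrable M (\<lambda>w. (f w)\<^sup>2 + (g w)\<^sup>2)" using assms by auto
  show "(\<lambda>w. f w * g w) \<in> borel_measurable M" using assms by measurable
  show "AE w in M. norm (f w * g w) \<le> norm ((f w)\<^sup>2 + (g w)\<^sup>2)"
  proof (intro AE_I2)
    fix w
    have "2 * (\<bar>f w\<bar> * \<bar>g w\<bar>) \<le> (f w)\<^sup>2 + (g w)\<^sup>2"
      using sum_squares_bound[of "\<bar>f w\<bar>" "\<bar>g w\<bar>"] by (simp add: mult.assoc)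
    moreover have "0 \<le> \<bar>f w\<bar> * \<bar>g w\<bar>" by simp
    ultimately have "\<bar>f w\<bar> * \<bar>g w\<bar> \<le> (f w)\<^sup>2 + (g w)\<^sup>2" by linarith
    then show "norm (f w * g w) \<le> norm ((f w)\<^sup>2 + (g w)\<^sup>2)"
      by (simp add: abs_mult)
  qed
qed

lemma integral_mult_eq_0_of_least_squares:
  fixes r X :: "'a \<Rightarrow> real"
  assumes r_meas: "r \<in> borel_measurable M" and X_meas: "X \<in> borel_measurable M"
    and r_sq: "integrable M (\<lambda>w. (r w)\<^sup>2)" and X_sq: "integrable M (\<lambda>w. (X w)\<^sup>2)"
    and least: "\<And>t. (\<integral>w. (r w)\<^sup>2 \<partial>M) \<le> (\<integral>w. (r w - t * X w)\<^sup>2 \<partial>M)"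
  shows "(\<integral>w. X w * r w \<partial>M) = 0"
proof (rule ccontr)
  define A where "A = (\<integral>w. (X w)\<^sup>2 \<partial>M)"
  define Z where "Z = (\<integral>w. X w * r w \<partial>M)"
  assume "Z \<noteq> 0"
  have Xr: "integrable M (\<lambda>w. X w * r w)"
    using X_meas r_meas X_sq r_sq by (rule integrable_mult_of_square_integrable)
  have expand: "(\<integral>w. (r w - t * X w)\<^sup>2 \<partial>M) = (\<integral>w. (r w)\<^sup>2 \<partial>M) - 2 * t * Z + t\<^sup>2 * A" for t
  proof -
    have "(\<lambda>w. (r w - t * X w)\<^sup>2) = (\<lambda>w. (r w)\<^sup>2 - (2 * t) * (X w * r w) + t\<^sup>2 * (X w)\<^sup>2)"
      by (rule ext) (simp add: power2_eq_square algebra_simps)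
    then show ?thesis
      using r_sq X_sq Xr unfolding Z_def A_def by simp
  qed
  \<comment> \<open>the step \<open>t\<close> is chosen so that \<open>Z = t (A + 1)\<close>; then the risk changes by \<open>-t\<^sup>2 (A + 2) < 0\<close>\<close>
  define t where "t = Z / (A + 1)"
  have "A \<ge> 0" unfolding A_def by simp
  then have Z_eq: "Z = t * (A + 1)" unfolding t_def by simp
  with \<open>Z \<noteq> 0\<close> have "t\<^sup>2 > 0" by auto
  have "- 2 * t * Z + t\<^sup>2 * A = - (t\<^sup>2 * (A + 2))"
    unfolding Z_eq by (simp add: power2_eq_square algebra_simps)
  also have "\<dots> < 0" using \<open>t\<^sup>2 > 0\<close> \<open>A \<ge> 0\<close> by simp
  finally show False using least[of t] expand[of t] by simp
qed

lemma integrable_component_square: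
  fixes x :: "'a \<Rightarrow> real^'d"
  assumes "x \<in> borel_measurable M" and "integrable M (\<lambda>w. (norm (x w))\<^sup>2)"
  shows "integrable M (\<lambda>w. (x w $ i)\<^sup>2)"
proof (rule Bochner_Integration.integrable_bound[OF assms(2)])
  have "(\<lambda>w. x w $ i) \<in> borel_measurable M"
    using measurable_compose[OF assms(1) borel_measurable_nth] .
  then show "(\<lambda>w. (x w $ i)\<^sup>2) \<in> borel_measurable M" by measurable
  have "\<bar>x w $ i\<bar>\<^sup>2 \<le> (norm (x w))\<^sup>2" for w
    by (intro power_mono component_le_norm_cart) auto
  then show "AE w in M. norm ((x w $ i)\<^sup>2) \<le> norm ((norm (x w))\<^sup>2)" by simp
qed

lemma integrable_residual_square:
  fixes x :: "'a \<Rightarrow> real^'d" and y :: "'a \<Rightarrow> real"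
  assumes "x \<in> borel_measurable M" "y \<in> borel_measurable M"
    and x_sq: "integrable M (\<lambda>w. (norm (x w))\<^sup>2)" and y_sq: "integrable M (\<lambda>w. (y w)\<^sup>2)"
  shows "integrable M (\<lambda>w. (y w - \<beta> \<bullet> x w)\<^sup>2)"
proof (rule Bochner_Integration.integrable_bound)
  show "integrable M (\<lambda>w. 2 * (y w)\<^sup>2 + 2 * (norm \<beta>)\<^sup>2 * (norm (x w))\<^sup>2)"
    using x_sq y_sq by auto
  show "(\<lambda>w. (y w - \<beta> \<bullet> x w)\<^sup>2) \<in> borel_measurable M" using assms(1,2) by measurable
  have "(y w - \<beta> \<bullet> x w)\<^sup>2 \<le> 2 * (y w)\<^sup>2 + 2 * (norm \<beta>)\<^sup>2 * (norm (x w))\<^sup>2" for w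
  proof -
    have "(\<beta> \<bullet> x w)\<^sup>2 \<le> (norm \<beta> * norm (x w))\<^sup>2"
      using Cauchy_Schwarz_ineq2 by (metis abs_ge_zero power2_abs power_mono)
    moreover have "0 \<le> (y w + \<beta> \<bullet> x w)\<^sup>2" by simp
    ultimately show ?thesis by (simp add: power2_eq_square algebra_simps)
  qed
  then show "AE w in M. norm ((y w - \<beta> \<bullet> x w)\<^sup>2)
      \<le> norm (2 * (y w)\<^sup>2 + 2 * (norm \<beta>)\<^sup>2 * (norm (x w))\<^sup>2)" by simp
qed

lemma Zres_eq_0_of_risk_minimiser:
  fixes x :: "'a \<Rightarrow> real^'d" and y :: "'a \<Rightarrow> real"
  assumes x_meas: "x \<in> borel_measurable M" and y_meas: "y \<in> borel_measurable M"
    and x_sq: "integrable M (\<lambda>w. (norm (x w))\<^sup>2)" and y_sq: "integrable M (\<lambda>w. (y w)\<^sup>2)"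
    and \<beta>S_supp: "supp \<beta>S \<subseteq> S"
    and \<beta>S_min: "\<And>\<beta>. supp \<beta> \<subseteq> S \<Longrightarrow> risk M x y \<beta>S \<le> risk M x y \<beta>"
    and "i \<in> S"
  shows "Zres M x y \<beta>S i = 0"
  unfolding Zres_def
proof (rule integral_mult_eq_0_of_least_squares)
  show "(\<lambda>w. x w $ i) \<in> borel_measurable M"
    using measurable_compose[OF x_meas borel_measurable_nth] .
  show "(\<lambda>w. y w - \<beta>S \<bullet> x w) \<in> borel_measurable M" using x_meas y_meas by measurable
  show "integrable M (\<lambda>w. (x w $ i)\<^sup>2)" using x_meas x_sq by (rule integrable_component_square)
  show "integrable M (\<lambda>w. (y w - \<beta>S \<bullet> x w)\<^sup>2)"
    using x_meas y_meas x_sq y_sq by (rule integrable_residual_square)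
  fix t
  define \<beta> where "\<beta> = \<beta>S + t *\<^sub>R axis i 1"
  have "supp \<beta> \<subseteq> S"
    using \<open>i \<in> S\<close> \<beta>S_supp unfolding supp_def \<beta>_def axis_def by auto
  then have "risk M x y \<beta>S \<le> risk M x y \<beta>" by (rule \<beta>S_min)
  moreover have "\<beta> \<bullet> x w = \<beta>S \<bullet> x w + t * x w $ i" for w
    unfolding \<beta>_def by (simp add: inner_add_left inner_commute[of "axis i 1"] inner_axis)
  ultimately show "(\<integral>w. (y w - \<beta>S \<bullet> x w)\<^sup>2 \<partial>M) \<le> (\<integral>w. (y w - \<beta>S \<bullet> x w - t * x w $ i)\<^sup>2 \<partial>M)"
    unfolding risk_def by (simp add: algebra_simps)
qed

lemma mult_Max_less_of_selection_certificate:
  fixes Z Zt eps :: "'d \<Rightarrow> real" and m :: real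
  assumes "finite F" and "0 \<le> m" and "m < 1"
    and bound: "\<And>i. i \<in> F \<Longrightarrow> \<bar>Z i\<bar> \<le> \<bar>Zt j\<bar> + eps j"
    and close: "\<bar>Zt j - Z j\<bar> \<le> eps j"
    and large: "(1 + m) / (1 - m) * eps j < \<bar>Zt j\<bar>"
  shows "m * Max (insert 0 ((\<lambda>i. \<bar>Z i\<bar>) ` F)) < \<bar>Z j\<bar>"
proof -
  have "0 \<le> eps j" using close by linarith
  then have "Max (insert 0 ((\<lambda>i. \<bar>Z i\<bar>) ` F)) \<le> \<bar>Zt j\<bar> + eps j"
    using \<open>finite F\<close> bound by (subst Max_le_iff) auto
  then have "m * Max (insert 0 ((\<lambda>i. \<bar>Z i\<bar>) ` F)) \<le> m * (\<bar>Zt j\<bar> + eps j)"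
    using \<open>0 \<le> m\<close> by (rule mult_left_mono)
  also have "\<dots> < \<bar>Zt j\<bar> - eps j"
    using large \<open>m < 1\<close> by (simp add: field_simps)
  also have "\<dots> \<le> \<bar>Z j\<bar>" using close by linarith
  finally show ?thesis .
qed

theorem mainTheorem5:
  fixes M :: "'a measure" and x :: "'a \<Rightarrow> real^'d" and y \<epsilon> :: "'a \<Rightarrow> real"
    and \<beta>star \<beta>S :: "real^'d" and S :: "'d set"
    and Zt eps :: "'d \<Rightarrow> real" and ihat :: 'd
  assumes M: "prob_space M"
    and x_meas: "x \<in> borel_measurable M" and y_meas: "y \<in> borel_measurable M"
    and x_sq: "integrable M (\<lambda>\<omega>. (norm (x \<omega>))\<^sup>2)" and y_sq: "integrable M (\<lambda>\<omega>. (y \<omega>)\<^sup>2)"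
    and x_mean: "\<And>i. (\<integral>\<omega>. x \<omega> $ i \<partial>M) = 0"
    and model: "\<And>\<omega>. \<omega> \<in> space M \<Longrightarrow> y \<omega> = \<beta>star \<bullet> x \<omega> + \<epsilon> \<omega>"
    and noise: "AE \<omega> in M. real_cond_exp M (vimage_algebra (space M) x borel) \<epsilon> \<omega> = 0"
    and irrep: "\<And>F. card F = card (supp \<beta>star) \<Longrightarrow>
                   subm_invertible (Sigma M x) F \<and> 0 \<le> mu (Sigma M x) F \<and> mu (Sigma M x) F < 1"
    and S_sub: "S \<subseteq> supp \<beta>star"
    and \<beta>S_supp: "supp \<beta>S \<subseteq> S"
    and \<beta>S_min: "\<And>\<beta>. supp \<beta> \<subseteq> S \<Longrightarrow> risk M x y \<beta>S \<le> risk M x y \<beta>"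
    and eps_pos: "\<And>i. i \<notin> S \<Longrightarrow> eps i > 0"
    and ihat: "ihat \<notin> S"
    and a: "\<And>i. i \<notin> S \<Longrightarrow> \<bar>Zt i\<bar> + eps i \<le> \<bar>Zt ihat\<bar> + eps ihat"
    and b: "\<And>i. i \<notin> S \<Longrightarrow> \<bar>Zt i - Zres M x y \<beta>S i\<bar> \<le> eps i"
    and c: "\<bar>Zt ihat\<bar> > (1 + mu (Sigma M x) (supp \<beta>star)) / (1 - mu (Sigma M x) (supp \<beta>star)) * eps ihat"
  shows "\<bar>Zres M x y \<beta>S ihat\<bar> >
           mu (Sigma M x) (supp \<beta>star) * Max (insert 0 ((\<lambda>i. \<bar>Zres M x y \<beta>S i\<bar>) ` supp \<beta>star))"
proof (rule mult_Max_less_of_selection_certificate)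
  show "0 \<le> mu (Sigma M x) (supp \<beta>star)" "mu (Sigma M x) (supp \<beta>star) < 1"
    using irrep[of "supp \<beta>star"] by simp_all
  show "\<bar>Zt ihat - Zres M x y \<beta>S ihat\<bar> \<le> eps ihat" using ihat by (rule b)
  show "\<bar>Zres M x y \<beta>S i\<bar> \<le> \<bar>Zt ihat\<bar> + eps ihat" for i
  proof (cases "i \<in> S")
    case True
    then have "Zres M x y \<beta>S i = 0"
      using Zres_eq_0_of_risk_minimiser[OF x_meas y_meas x_sq y_sq \<beta>S_supp \<beta>S_min] by blast
    moreover have "eps ihat > 0" using ihat by (rule eps_pos)
    ultimately show ?thesis by simp
  next
    case False
    then show ?thesis using a[OF False] b[OF False] by linarith
  qed
  show "(1 + mu (Sigma M x) (supp \<beta>star)) / (1 - mu (Sigma M x) (supp \<beta>star)) * eps ihat < \<bar>Zt ihat\<bar>"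
    by (rule c)
qed simp

end
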